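(* Let $P$ be an APP with stochastic game structure $\mathcal{G}_P$ and let $I$ be a linear invariant for $\mathcal{G}_P$. If there exists an LRSM $\eta$ with respect to $I$ (with constants $\epsilon\ge1$, $K,K'\le-1$), then (1) $P$ is almost-surely terminating, i.e. there is an angelic scheduler $\sigma$ (namely any $\eta$-greedy one) such that $\mathbb{P}^{\sigma,\pi}(T<\infty)=1$ for every demonic scheduler $\pi$; and (2) $\mathsf{ET}(P)\le\frac{\eta(\ell_0,\mathbf{x}_0)-K'}{\epsilon}$, in particular $\mathsf{ET}(P)<\infty$ (indeed $\sup_\pi\mathbb{E}^{\sigma,\pi}[T]\le\frac{\eta(\ell_0,\mathbf{x}_0)-K'}{\epsilon}$ for every $\eta$-greedy $\sigma$).
   Context: Affine probabilistic programs (APPs) and their semantics. An APP $P$ has finitely many real-valued program variables $X=\{x_1,\dots,x_{|X|}\}$ with a given initial valuation $\mathbf{x}_0\in\mathbb{R}^{|X|}$, and finitely many real-valued random variables $R$ with a fixed joint distribution $\mathcal{D}$ whose every component is integrable; a fresh sample $\mathbf{r}\sim\mathcal{D}$ is drawn at each step, independently of the past. $P$ is built from assignments $x:=e$ ($e$ an affine expression over program and random variables), skip, sequencing, while loops guarded by propositionally linear predicates (finite disjunctions of linear assertions; a linear assertion is a finite conjunction of linear constraints, each a non-strict inequality between affine expressions or its negation), and if-then-else statements whose guard is either a propositionally linear predicate or one of the keywords angel (angelic nondeterministic choice), demon (demonic nondeterministic choice), prob($p$) (then-branch taken with probability $p\in[0,1]$). $P$ is interpreted as a stochastic game structure $\mathcal{G}_P$: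 a finite set $L$ of locations partitioned into angelic, demonic, probabilistic and deterministic locations; an initial location $\ell_0$; a deterministic terminal location $\ell_{out}$ with an identity self-loop; and transitions $(\ell,f,\ell')$ with affine update functions $f:\mathbb{R}^{|X|}\times\mathbb{R}^{|R|}\to\mathbb{R}^{|X|}$. An assignment yields a deterministic location with one transition performing the update; all other transitions (control flow, and all transitions out of angelic, demonic and probabilistic locations) have the identity update $id$. Each location has at most two outgoing transitions; a probabilistic location $\ell$ carries a probability distribution $Pr_\ell$ over its outgoing transitions; each transition $\tau$ out of a deterministic location has a guard $G(\tau)$ (a propositionally linear predicate), and the guards of the transitions out of one location are mutually exclusive and jointly exhaustive. A configuration is a pair $(\ell,\mathbf{x})$. An angelic (resp. demonic) scheduler maps every finite sequence of configurations ending in an angelic (resp. demonic) location $\ell$ to a transition out of $\ell$. For an angelic scheduler $\sigma$ and demonic scheduler $\pi$, a run $c_1c_2\cdots$ is generated from $c_1=(\ell_0,\mathbf{x}_0)$: if $c_n=(\ell,\mathbf{x})$, sample $\mathbf{r}\sim\mathcal{D}$, pick a transition $(\ell,f,\ell')$ out of $\ell$ (by $\sigma$ resp. $\pi$ applied to $c_1\cdots c_n$ if $\ell$ is angelic resp. demonic; randomly according to $Pr_\ell$ if probabilistic; the unique one whose guard $\mathbf{x}$ satisfies if deterministic) and set $c_{n+1}=(\ell',f(\mathbf{x},\mathbf{r}))$. This yields a probability measure $\mathbb{P}^{\sigma,\pi}$ on runs with expectation $\mathbb{E}^{\sigma,\pi}$. Let $\theta_n$ and $\overline{\mathbf{x}}_n$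 be the location and valuation of $c_n$, let $\mathcal{F}_n$ be the $\sigma$-algebra generated by $\theta_j,\overline{\mathbf{x}}_j$ for $j\le n$, and let $T=\min\{n:\theta_n=\ell_{out}\}$ ($\min\emptyset=\infty$) be the termination time. $\mathsf{ET}(P)=\inf_\sigma\sup_\pi\mathbb{E}^{\sigma,\pi}[T]$. A configuration is reachable if it occurs on some finite path from $(\ell_0,\mathbf{x}_0)$ (consecutive configurations related by a transition enabled in the first one and some value $\mathbf{r}$ in the range of the random variables). Linear invariants and LRSMs. A linear invariant $I$ assigns to each location $\ell$ a finite set $I(\ell)$ of linear assertions over $X$ such that every reachable configuration $(\ell,\mathbf{x})$ satisfies $\mathbf{x}\in\bigcup I(\ell)$. For $\eta:L\times\mathbb{R}^{|X|}\to\mathbb{R}$, the pre-expectation $\mathrm{pre}_\eta(\ell,\mathbf{x})$ equals $\sum_{(\ell,id,\ell')}Pr_\ell(\ell,id,\ell')\,\eta(\ell',\mathbf{x})$ if $\ell$ is probabilistic; $\max_{(\ell,id,\ell')}\eta(\ell',\mathbf{x})$ if $\ell$ is demonic; $\min_{(\ell,id,\ell')}\eta(\ell',\mathbf{x})$ if $\ell$ is angelic; and $\eta(\ell',\mathbb{E}_{\mathbf{r}\sim\mathcal{D}}f(\mathbf{x},\mathbf{r}))$ if $\ell$ is deterministic and $(\ell,f,\ell')$ is the transition whose guard $\mathbf{x}$ satisfies. A linear ranking-supermartingale map (LRSM) with respect to $I$ is a function $\eta:L\times\mathbb{R}^{|X|}\to\mathbb{R}$ for which there exist $\epsilon\ge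 1$ and $K,K'\le -1$ such that for all $\ell\in L$, $\mathbf{x}\in\mathbb{R}^{|X|}$: (C1) $\eta(\ell,\cdot)$ is affine; (C2) if $\ell\ne\ell_{out}$ and $\mathbf{x}\in\bigcup I(\ell)$ then $\eta(\ell,\mathbf{x})\ge0$; (C3) if $\ell=\ell_{out}$ and $\mathbf{x}\in\bigcup I(\ell)$ then $K'\le\eta(\ell,\mathbf{x})\le K$; (C4) if $\ell\ne\ell_{out}$ and $\mathbf{x}\in\bigcup I(\ell)$ then $\mathrm{pre}_\eta(\ell,\mathbf{x})\le\eta(\ell,\mathbf{x})-\epsilon$. An angelic scheduler is $\eta$-greedy if, on every finite path ending in a configuration $(\ell,\mathbf{x})$ with $\ell$ angelic, it chooses a transition $(\ell,id,\ell')$ with $\eta(\ell',\mathbf{x})=\min_{(\ell,id,\ell'')}\eta(\ell'',\mathbf{x})$. *)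

theory Defs
  imports "HOL-Probability.Probability"
begin

datatype lkind = Angel | Demon | Probab | Determ

text \<open>Every location has (at most) two outgoing
  transitions, indexed by a Boolean branch; a location with a single outgoing
  transition is represented with two identical branches (for deterministic
  locations: one branch with guard true everywhere and one with guard false).
  prb l is the probability of the True-branch at a probabilistic location.
  dist is the joint distribution D of the random variables.\<close>
record ('l, 'n::finite, 'r::finite) sgs =
  kind :: "'l \<Rightarrow> lkind"
  init_loc :: 'l
  out_loc :: 'l
  init_val :: "real ^ 'n"
  succ :: "'l \<Rightarrow> bool \<Rightarrow> 'l"
  upd :: "'l \<Rightarrow> bool \<Rightarrow> real ^ 'n \<Rightarrow> real ^ 'r \<Rightarrow> real ^ 'n"
  guard :: "'l \<Rightarrow> bool \<Rightarrow> real ^ 'n \<Rightarrow> bool"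
  prb :: "'l \<Rightarrow> real"
  dist :: "(real ^ 'r) measure"

text \<open>Linear constraint a.x <= c (s = True) or its negation (s = False);
  a linear assertion is a finite conjunction of these; a propositionally linear
  predicate is a finite disjunction of linear assertions.\<close>
definition lin_assertion :: "(real ^ 'n::finite \<Rightarrow> bool) \<Rightarrow> bool" where
  "lin_assertion \<phi> \<longleftrightarrow>
     (\<exists>cs :: ((real ^ 'n) \<times> real \<times> bool) list.
        \<phi> = (\<lambda>x. \<forall>(a, c, s) \<in> set cs. (a \<bullet> x \<le> c) = s))"

definition prop_linear :: "(real ^ 'n::finite \<Rightarrow> bool) \<Rightarrow> bool" where
  "prop_linear \<phi> \<longleftrightarrow>
     (\<exists>As. (\<forall>A \<in> set As. lin_assertion A) \<and> \<phi> = (\<lambda>x. \<exists>A \<in> set As. A x))"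

definition affine_upd :: "(real ^ 'n::finite \<Rightarrow> real ^ 'r::finite \<Rightarrow> real ^ 'n) \<Rightarrow> bool" where
  "affine_upd f \<longleftrightarrow>
     (\<exists>(A :: real ^ 'n ^ 'n) (B :: real ^ 'r ^ 'n) c. \<forall>x r. f x r = A *v x + B *v r + c)"

definition well_formed :: "('l, 'n::finite, 'r::finite) sgs \<Rightarrow> bool" where
  "well_formed G \<longleftrightarrow>
     prob_space (dist G) \<and> sets (dist G) = sets borel \<and>
     (\<forall>i. integrable (dist G) (\<lambda>r. r $ i)) \<and>
     kind G (out_loc G) = Determ \<and>
     (\<forall>b. succ G (out_loc G) b = out_loc G \<and> upd G (out_loc G) b = (\<lambda>x r. x)) \<and>
     (\<forall>l b. affine_upd (upd G l b)) \<and>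
     (\<forall>l b. kind G l \<noteq> Determ \<longrightarrow> upd G l b = (\<lambda>x r. x)) \<and>
     (\<forall>l. kind G l = Determ \<longrightarrow>
          (\<forall>b. prop_linear (guard G l b)) \<and> (\<forall>x. guard G l True x \<longleftrightarrow> \<not> guard G l False x)) \<and>
     (\<forall>l. kind G l = Probab \<longrightarrow> 0 \<le> prb G l \<and> prb G l \<le> 1)"

text \<open>The range of the random variables: the support of D.\<close>
definition dist_support :: "('l, 'n::finite, 'r::finite) sgs \<Rightarrow> (real ^ 'r) set" where
  "dist_support G = {r. \<forall>U. open U \<longrightarrow> r \<in> U \<longrightarrow> emeasure (dist G) U > 0}"

definition enabled :: "('l, 'n::finite, 'r::finite) sgs \<Rightarrow> 'l \<Rightarrow> real ^ 'n \<Rightarrow> bool \<Rightarrow> bool" where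
  "enabled G l x b \<longleftrightarrow> (kind G l = Determ \<longrightarrow> guard G l b x)"

definition step_rel :: "('l, 'n::finite, 'r::finite) sgs \<Rightarrow> 'l \<times> (real ^ 'n) \<Rightarrow> 'l \<times> (real ^ 'n) \<Rightarrow> bool" where
  "step_rel G c c' \<longleftrightarrow>
     (\<exists>b r. enabled G (fst c) (snd c) b \<and> r \<in> dist_support G \<and>
            c' = (succ G (fst c) b, upd G (fst c) b (snd c) r))"

definition reachable :: "('l, 'n::finite, 'r::finite) sgs \<Rightarrow> 'l \<times> (real ^ 'n) \<Rightarrow> bool" where
  "reachable G c \<longleftrightarrow> (step_rel G)\<^sup>*\<^sup>* (init_loc G, init_val G) c"

definition fpath :: "('l, 'n::finite, 'r::finite) sgs \<Rightarrow> ('l \<times> (real ^ 'n)) list \<Rightarrow> bool" where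
  "fpath G h \<longleftrightarrow> h \<noteq> [] \<and> hd h = (init_loc G, init_val G) \<and>
     (\<forall>i. Suc i < length h \<longrightarrow> step_rel G (h ! i) (h ! Suc i))"

definition inv_holds :: "('l \<Rightarrow> (real ^ 'n::finite \<Rightarrow> bool) set) \<Rightarrow> 'l \<Rightarrow> real ^ 'n \<Rightarrow> bool" where
  "inv_holds I l x \<longleftrightarrow> (\<exists>\<phi> \<in> I l. \<phi> x)"

definition lin_invariant ::
  "('l, 'n::finite, 'r::finite) sgs \<Rightarrow> ('l \<Rightarrow> (real ^ 'n \<Rightarrow> bool) set) \<Rightarrow> bool" where
  "lin_invariant G I \<longleftrightarrow>
     (\<forall>l. finite (I l) \<and> (\<forall>\<phi> \<in> I l. lin_assertion \<phi>)) \<and>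
     (\<forall>l x. reachable G (l, x) \<longrightarrow> inv_holds I l x)"

definition pre_exp ::
  "('l, 'n::finite, 'r::finite) sgs \<Rightarrow> ('l \<Rightarrow> real ^ 'n \<Rightarrow> real) \<Rightarrow> 'l \<Rightarrow> real ^ 'n \<Rightarrow> real" where
  "pre_exp G \<eta> l x =
     (case kind G l of
        Probab \<Rightarrow> prb G l * \<eta> (succ G l True) x + (1 - prb G l) * \<eta> (succ G l False) x
      | Demon \<Rightarrow> max (\<eta> (succ G l True) x) (\<eta> (succ G l False) x)
      | Angel \<Rightarrow> min (\<eta> (succ G l True) x) (\<eta> (succ G l False) x)
      | Determ \<Rightarrow> \<eta> (succ G l (guard G l True x))
                    (integral\<^sup>L (dist G) (\<lambda>r. upd G l (guard G l True x) x r)))"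

definition is_LRSM ::
  "('l, 'n::finite, 'r::finite) sgs \<Rightarrow> ('l \<Rightarrow> (real ^ 'n \<Rightarrow> bool) set) \<Rightarrow>
   ('l \<Rightarrow> real ^ 'n \<Rightarrow> real) \<Rightarrow> real \<Rightarrow> real \<Rightarrow> real \<Rightarrow> bool" where
  "is_LRSM G I \<eta> \<epsilon> K K' \<longleftrightarrow>
     \<epsilon> \<ge> 1 \<and> K \<le> -1 \<and> K' \<le> -1 \<and>
     (\<forall>l. \<exists>a c. \<forall>x. \<eta> l x = a \<bullet> x + c) \<and>
     (\<forall>l x. l \<noteq> out_loc G \<longrightarrow> inv_holds I l x \<longrightarrow> \<eta> l x \<ge> 0) \<and>
     (\<forall>x. inv_holds I (out_loc G) x \<longrightarrow> K' \<le> \<eta> (out_loc G) x \<and> \<eta> (out_loc G) x \<le> K) \<and>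
     (\<forall>l x. l \<noteq> out_loc G \<longrightarrow> inv_holds I l x \<longrightarrow> pre_exp G \<eta> l x \<le> \<eta> l x - \<epsilon>)"

text \<open>A scheduler maps a finite history of configurations to a branch;
  only its values on histories ending in an angelic (resp. demonic) location
  matter. Schedulers are required to be measurable.\<close>
type_synonym ('l, 'n) sched = "('l \<times> (real ^ 'n)) list \<Rightarrow> bool"

definition sched_measurable :: "('l, 'n::finite) sched \<Rightarrow> bool" where
  "sched_measurable \<sigma> \<longleftrightarrow>
     (\<forall>n. (\<lambda>h. \<sigma> (map h [0..<Suc n])) \<in>
        measurable (PiM UNIV (\<lambda>_::nat. count_space UNIV \<Otimes>\<^sub>M (borel :: (real ^ 'n) measure)))
                   (count_space UNIV))"

definition greedy ::
  "('l, 'n::finite, 'r::finite) sgs \<Rightarrow> ('l \<Rightarrow> real ^ 'n \<Rightarrow> real) \<Rightarrow> ('l, 'n) sched \<Rightarrow> bool" where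
  "greedy G \<eta> \<sigma> \<longleftrightarrow>
     (\<forall>h l x. fpath G h \<longrightarrow> last h = (l, x) \<longrightarrow> kind G l = Angel \<longrightarrow>
        \<eta> (succ G l (\<sigma> h)) x = min (\<eta> (succ G l True) x) (\<eta> (succ G l False) x))"

text \<open>Noise: at each step an independent sample r from D and an independent
  uniform u in [0,1] used to resolve probabilistic branching.\<close>
definition noise :: "('l, 'n::finite, 'r::finite) sgs \<Rightarrow> (nat \<Rightarrow> (real ^ 'r) \<times> real) measure" where
  "noise G = PiM UNIV (\<lambda>_::nat. dist G \<Otimes>\<^sub>M uniform_measure lborel {0..1::real})"

definition next_cfg ::
  "('l, 'n::finite, 'r::finite) sgs \<Rightarrow> ('l, 'n) sched \<Rightarrow> ('l, 'n) sched \<Rightarrow>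
   ('l \<times> (real ^ 'n)) list \<Rightarrow> (real ^ 'r) \<times> real \<Rightarrow> 'l \<times> (real ^ 'n)" where
  "next_cfg G \<sigma> \<pi> h ru =
     (let l = fst (last h); x = snd (last h); r = fst ru; u = snd ru;
          b = (case kind G l of
                 Angel \<Rightarrow> \<sigma> h
               | Demon \<Rightarrow> \<pi> h
               | Probab \<Rightarrow> u < prb G l
               | Determ \<Rightarrow> guard G l True x)
      in (succ G l b, upd G l b x r))"

primrec hist ::
  "('l, 'n::finite, 'r::finite) sgs \<Rightarrow> ('l, 'n) sched \<Rightarrow> ('l, 'n) sched \<Rightarrow>
   (nat \<Rightarrow> (real ^ 'r) \<times> real) \<Rightarrow> nat \<Rightarrow> ('l \<times> (real ^ 'n)) list" where
  "hist G \<sigma> \<pi> \<omega> 0 = [(init_loc G, init_val G)]"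
| "hist G \<sigma> \<pi> \<omega> (Suc n) = hist G \<sigma> \<pi> \<omega> n @ [next_cfg G \<sigma> \<pi> (hist G \<sigma> \<pi> \<omega> n) (\<omega> n)]"

definition cfg ::
  "('l, 'n::finite, 'r::finite) sgs \<Rightarrow> ('l, 'n) sched \<Rightarrow> ('l, 'n) sched \<Rightarrow>
   (nat \<Rightarrow> (real ^ 'r) \<times> real) \<Rightarrow> nat \<Rightarrow> 'l \<times> (real ^ 'n)" where
  "cfg G \<sigma> \<pi> \<omega> n = last (hist G \<sigma> \<pi> \<omega> n)"

definition term_time ::
  "('l, 'n::finite, 'r::finite) sgs \<Rightarrow> ('l, 'n) sched \<Rightarrow> ('l, 'n) sched \<Rightarrow>
   (nat \<Rightarrow> (real ^ 'r) \<times> real) \<Rightarrow> ennreal" where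
  "term_time G \<sigma> \<pi> \<omega> =
     (if \<exists>n. fst (cfg G \<sigma> \<pi> \<omega> n) = out_loc G
      then of_nat (LEAST n. fst (cfg G \<sigma> \<pi> \<omega> n) = out_loc G) else \<infinity>)"

definition prob_term :: "('l, 'n::finite, 'r::finite) sgs \<Rightarrow> ('l, 'n) sched \<Rightarrow> ('l, 'n) sched \<Rightarrow> ennreal" where
  "prob_term G \<sigma> \<pi> =
     emeasure (noise G) {\<omega> \<in> space (noise G). \<exists>n. fst (cfg G \<sigma> \<pi> \<omega> n) = out_loc G}"

definition exp_T :: "('l, 'n::finite, 'r::finite) sgs \<Rightarrow> ('l, 'n) sched \<Rightarrow> ('l, 'n) sched \<Rightarrow> ennreal" where
  "exp_T G \<sigma> \<pi> = (\<integral>\<^sup>+ \<omega>. term_time G \<sigma> \<pi> \<omega> \<partial>noise G)"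

definition ET :: "('l, 'n::finite, 'r::finite) sgs \<Rightarrow> ennreal" where
  "ET G = (\<Sqinter>\<sigma> \<in> {\<sigma>. sched_measurable \<sigma>}. \<Squnion>\<pi> \<in> {\<pi>. sched_measurable \<pi>}. exp_T G \<sigma> \<pi>)"

end

theory Submission
  imports Defs
begin

text \<open>Shifted by \<open>-K'\<close>, the LRSM becomes a nonnegative potential on all reachable
  configurations. Under an \<open>\<eta>\<close>-greedy angelic scheduler and any demonic scheduler, its
  expectation drops by at least \<open>\<epsilon>\<close> in every step taken before termination: the greedy choice
  attains the angelic minimum of the pre-expectation, a demonic choice stays below the maximum, and
  at assignments the affine \<open>\<eta>\<close> commutes with the expectation of the affine update. Summing the
  drops gives \<open>\<epsilon> E[T] \<le> \<eta>(\<ell>\<^sub>0, x\<^sub>0) - K'\<close>; finiteness of \<open>E[T]\<close> gives almost-sure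
  termination, and the greedy scheduler that compares the two successor values is measurable, so it
  witnesses the bound on \<open>ET\<close>.\<close>

lemma lin_assertion_measurable:
  fixes \<phi> :: "real ^ 'n::finite \<Rightarrow> bool"
  assumes "lin_assertion \<phi>"
  shows "Measurable.pred borel \<phi>"
proof -
  obtain cs :: "((real ^ 'n) \<times> real \<times> bool) list"
    where cs: "\<phi> = (\<lambda>x. \<forall>(a, c, s) \<in> set cs. (a \<bullet> x \<le> c) = s)"
    using assms unfolding lin_assertion_def by blast
  have "Measurable.pred borel (\<lambda>x::real ^ 'n. \<forall>p \<in> set cs. (fst p \<bullet> x \<le> fst (snd p)) = snd (snd p))"
    by (intro pred_intros_finite) auto
  then show ?thesis
    unfolding cs by (simp add: case_prod_beta)
qed

lemma prop_linear_measurable: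
  fixes \<phi> :: "real ^ 'n::finite \<Rightarrow> bool"
  assumes "prop_linear \<phi>"
  shows "Measurable.pred borel \<phi>"
proof -
  obtain As where "\<forall>A \<in> set As. lin_assertion A" and \<phi>: "\<phi> = (\<lambda>x. \<exists>A \<in> set As. A x)"
    using assms unfolding prop_linear_def by blast
  then show ?thesis
    using lin_assertion_measurable unfolding \<phi> by (intro pred_intros_finite) auto
qed

lemma continuous_on_affine_upd:
  fixes f :: "real ^ 'n::finite \<Rightarrow> real ^ 'r::finite \<Rightarrow> real ^ 'n"
  assumes "affine_upd f"
  shows "continuous_on UNIV (\<lambda>p. f (fst p) (snd p))"
proof -
  obtain A B c where f: "\<And>x r. f x r = A *v x + B *v r + c"
    using assms unfolding affine_upd_def by blast
  have "continuous_on UNIV (\<lambda>p::(real ^ 'n) \<times> (real ^ 'r). A *v fst p + B *v snd p + c)"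
    by (intro continuous_intros linear_continuous_on
        continuous_on_compose2[OF linear_continuous_on[OF matrix_vector_mul_bounded_linear]]) auto
  then show ?thesis
    by (simp add: f)
qed

lemma integrable_vec_componentwise:
  fixes f :: "'a \<Rightarrow> real ^ 'n::finite"
  assumes "\<And>i. integrable M (\<lambda>x. f x $ i)"
  shows "integrable M f"
proof -
  have "integrable M (\<lambda>x. \<Sum>i\<in>UNIV. (f x $ i) *\<^sub>R axis i (1::real))"
    using assms by (intro Bochner_Integration.integrable_sum integrable_scaleR_left)
  then show ?thesis
    by (simp add: basis_expansion flip: scalar_mult_eq_scaleR)
qed

text \<open>The points outside the support are covered by the null members of a countable basis.\<close>

lemma AE_open_neighbourhoods_positive:
  fixes M :: "'a::second_countable_topology measure"
  assumes sets_M: "sets M = sets borel"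
  shows "AE x in M. \<forall>U. open U \<longrightarrow> x \<in> U \<longrightarrow> emeasure M U > 0"
proof -
  obtain B :: "'a set set" where B: "countable B" "topological_basis B"
    using ex_countable_basis by blast
  define B0 where "B0 = {b \<in> B. emeasure M b = 0}"
  have B_sets: "b \<in> sets M" if "b \<in> B" for b
    using that B(2) sets_M by (simp add: topological_basis_def)
  have null: "(\<Union>b\<in>B0. b) \<in> null_sets M"
    by (rule null_sets_UN') (use B(1) B_sets in \<open>auto simp: B0_def null_sets_def intro: countable_subset[of _ B]\<close>)
  show ?thesis
  proof (rule AE_I'[OF null], rule subsetI)
    fix x assume "x \<in> {x \<in> space M. \<not> (\<forall>U. open U \<longrightarrow> x \<in> U \<longrightarrow> emeasure M U > 0)}"
    then obtain U where U: "open U" "x \<in> U" "\<not> emeasure M U > 0"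
      by blast
    then obtain b where b: "b \<in> B" "x \<in> b" "b \<subseteq> U"
      using topological_basisE[OF B(2)] by blast
    have "emeasure M b \<le> emeasure M U"
      using U(1) sets_M b(3) by (intro emeasure_mono) auto
    then show "x \<in> (\<Union>b\<in>B0. b)"
      using b U(3) by (auto simp: B0_def)
  qed
qed

lemma (in prob_space) nn_integral_inner_affine:
  fixes f :: "'a \<Rightarrow> 'b::euclidean_space"
  assumes f: "integrable M f" and nonneg: "AE x in M. 0 \<le> a \<bullet> f x + c"
  shows "(\<integral>\<^sup>+x. ennreal (a \<bullet> f x + c) \<partial>M) = ennreal (a \<bullet> expectation f + c)"
    and "0 \<le> a \<bullet> expectation f + c"
proof -
  have "expectation (\<lambda>x. a \<bullet> f x + c) = a \<bullet> expectation f + c"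
    using f by (simp add: prob_space)
  moreover have "integrable M (\<lambda>x. a \<bullet> f x + c)"
    using f by simp
  ultimately show "(\<integral>\<^sup>+x. ennreal (a \<bullet> f x + c) \<partial>M) = ennreal (a \<bullet> expectation f + c)"
    and "0 \<le> a \<bullet> expectation f + c"
    using nn_integral_eq_integral integral_nonneg_AE[OF nonneg] nonneg by metis+
qed

lemma nn_integral_uniform_unit_threshold:
  fixes a b :: ennreal and p :: real
  assumes "0 \<le> p" "p \<le> 1"
  shows "(\<integral>\<^sup>+u. (if u < p then a else b) \<partial>uniform_measure lborel {0..1}) = ennreal p * a + ennreal (1 - p) * b"
proof -
  let ?U = "uniform_measure lborel {0..1::real}"
  have "{0..1} \<inter> {..<p} = {0..<p}" "{0..1} \<inter> {p..} = {p..1}"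
    using assms by auto
  then have "emeasure ?U {..<p} = ennreal p" "emeasure ?U {p..} = ennreal (1 - p)"
    using assms by (simp_all add: divide_ennreal_def)
  moreover have "(\<integral>\<^sup>+u. (if u < p then a else b) \<partial>?U) = (\<integral>\<^sup>+u. a * indicator {..<p} u + b * indicator {p..} u \<partial>?U)"
    by (rule nn_integral_cong) (auto simp: indicator_def)
  ultimately show ?thesis
    by (simp add: nn_integral_add nn_integral_cmult_indicator ac_simps)
qed

text \<open>\<open>comb_seq n\<close> splits an i.i.d. sequence into its first \<open>n\<close> coordinates and an
  independent tail whose head is the \<open>n\<close>-th coordinate.\<close>

lemma (in sequence_space) nn_integral_split_component:
  assumes g: "g \<in> borel_measurable (S \<Otimes>\<^sub>M M)"
    and prefix: "\<And>\<omega> \<omega>' s. (\<And>j. j < n \<Longrightarrow> \<omega> j = \<omega>' j) \<Longrightarrow> g (\<omega>, s) = g (\<omega>', s)"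
  shows "(\<integral>\<^sup>+\<omega>. g (\<omega>, \<omega> n) \<partial>S) = (\<integral>\<^sup>+\<omega>. \<integral>\<^sup>+s. g (\<omega>, s) \<partial>M \<partial>S)"
proof -
  have "(\<lambda>\<omega>. g (\<omega>, \<omega> n)) \<in> borel_measurable S"
    by (rule measurable_compose[OF _ g]) simp
  then have "(\<integral>\<^sup>+\<omega>. g (\<omega>, \<omega> n) \<partial>S) = (\<integral>\<^sup>+p. g (comb_seq n (fst p) (snd p), comb_seq n (fst p) (snd p) n) \<partial>(S \<Otimes>\<^sub>M S))"
    by (subst PiM_comb_seq[of n, symmetric]) (simp add: nn_integral_distr measurable_comb_seq case_prod_beta)
  also have "\<dots> = (\<integral>\<^sup>+p. g (fst p, snd p 0) \<partial>(S \<Otimes>\<^sub>M S))"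
  proof (rule nn_integral_cong)
    fix p :: "(nat \<Rightarrow> 'a) \<times> (nat \<Rightarrow> 'a)"
    have "g (comb_seq n (fst p) (snd p), s) = g (fst p, s)" for s
      by (rule prefix) (simp add: comb_seq_less)
    then show "g (comb_seq n (fst p) (snd p), comb_seq n (fst p) (snd p) n) = g (fst p, snd p 0)"
      using comb_seq_add[of n "fst p" "snd p" 0] by simp
  qed
  also have "\<dots> = (\<integral>\<^sup>+\<omega>. \<integral>\<^sup>+\<omega>'. g (\<omega>, \<omega>' 0) \<partial>S \<partial>S)"
  proof -
    have "(\<lambda>p. g (fst p, snd p 0)) \<in> borel_measurable (S \<Otimes>\<^sub>M S)"
      by (rule measurable_compose[OF _ g]) measurable
    from P.nn_integral_fst[OF this] show ?thesis
      by simp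
  qed
  also have "\<dots> = (\<integral>\<^sup>+\<omega>. \<integral>\<^sup>+s. g (\<omega>, s) \<partial>M \<partial>S)"
  proof (intro nn_integral_cong)
    fix \<omega> assume "\<omega> \<in> space S"
    then show "(\<integral>\<^sup>+\<omega>'. g (\<omega>, \<omega>' 0) \<partial>S) = (\<integral>\<^sup>+s. g (\<omega>, s) \<partial>M)"
      using g by (subst PiM_component[of 0, symmetric]) (auto simp: nn_integral_distr)
  qed
  finally show ?thesis .
qed

lemma ennreal_mult_suminf_le_of_decrease:
  fixes a b :: "nat \<Rightarrow> ennreal"
  assumes decrease: "\<And>n. a (Suc n) + e * b n \<le> a n"
  shows "e * (\<Sum>n. b n) \<le> a 0"
proof -
  have partial: "e * (\<Sum>k<n. b k) + a n \<le> a 0" for n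
  proof (induction n)
    case (Suc n)
    have "e * (\<Sum>k<Suc n. b k) + a (Suc n) = e * (\<Sum>k<n. b k) + (a (Suc n) + e * b n)"
      by (simp add: distrib_left ac_simps)
    also have "\<dots> \<le> e * (\<Sum>k<n. b k) + a n"
      using decrease by (rule add_left_mono)
    finally show ?case
      using Suc.IH by order
  qed simp
  have "(\<Sum>k<n. e * b k) \<le> a 0" for n
  proof -
    have "(\<Sum>k<n. e * b k) \<le> e * (\<Sum>k<n. b k) + a n"
      by (simp add: sum_distrib_left)
    also have "\<dots> \<le> a 0"
      by (rule partial)
    finally show ?thesis .
  qed
  then have "(\<Sum>n. e * b n) \<le> a 0"
    by (intro suminf_le_const summableI)
  then show ?thesis
    by simp
qed

lemma hitting_time_eq_suminf:
  assumes absorbing: "\<And>k j. P k \<Longrightarrow> P (k + j)"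
  shows "(if \<exists>n. P n then of_nat (LEAST n. P n) else \<infinity>) = (\<Sum>k. if P k then 0 else (1::ennreal))"
proof (cases "\<exists>n. P n")
  case True
  define N where "N = (LEAST n. P n)"
  have "P k \<longleftrightarrow> N \<le> k" for k
  proof
    assume "P k"
    then show "N \<le> k"
      unfolding N_def by (rule Least_le)
  next
    assume "N \<le> k"
    then show "P k"
      using absorbing[OF LeastI_ex[OF True], of "k - N"] by (simp add: N_def)
  qed
  then have "(\<Sum>k. if P k then 0 else (1::ennreal)) = (\<Sum>k<N. 1)"
    by (subst suminf_finite[of "{..<N}"]) auto
  then show ?thesis
    using True by (simp add: N_def)
next
  case False
  have "(\<lambda>k. (1::ennreal)) sums \<infinity>"
    by (simp add: sums_def of_nat_tendsto_top_ennreal)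
  then show ?thesis
    using False by (simp add: sums_unique[symmetric])
qed

lemma nn_integral_pair_measure_fst:
  assumes "sigma_finite_measure M1" "prob_space M2" "f \<in> borel_measurable M1"
  shows "(\<integral>\<^sup>+p. f (fst p) \<partial>(M1 \<Otimes>\<^sub>M M2)) = (\<integral>\<^sup>+x. f x \<partial>M1)"
proof -
  have "(\<lambda>p. f (fst p)) \<in> borel_measurable (M1 \<Otimes>\<^sub>M M2)"
    using assms(3) by measurable
  from sigma_finite_measure.nn_integral_fst[OF prob_space_imp_sigma_finite[OF assms(2)] this]
  show ?thesis
    by (simp add: prob_space.emeasure_space_1[OF assms(2)])
qed

lemma nn_integral_pair_measure_snd:
  assumes "prob_space M1" "sigma_finite_measure M2" "f \<in> borel_measurable M2"
  shows "(\<integral>\<^sup>+p. f (snd p) \<partial>(M1 \<Otimes>\<^sub>M M2)) = (\<integral>\<^sup>+y. f y \<partial>M2)"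
proof -
  have "(\<lambda>p. f (snd p)) \<in> borel_measurable (M1 \<Otimes>\<^sub>M M2)"
    using assms(3) by measurable
  from sigma_finite_measure.nn_integral_fst[OF assms(2) this]
  show ?thesis
    by (simp add: prob_space.emeasure_space_1[OF assms(1)])
qed

locale lrsm_program =
  fixes G :: "('l::finite, 'n::finite, 'r::finite) sgs"
    and I :: "'l \<Rightarrow> (real ^ 'n \<Rightarrow> bool) set"
    and \<eta> :: "'l \<Rightarrow> real ^ 'n \<Rightarrow> real"
    and \<epsilon> K K' :: real
  assumes well_formed: "well_formed G"
    and invariant: "lin_invariant G I"
    and LRSM: "is_LRSM G I \<eta> \<epsilon> K K'"
begin

lemma
  shows prob_space_dist: "prob_space (dist G)"
    and sets_dist: "sets (dist G) = sets borel"
    and integrable_dist_component: "integrable (dist G) (\<lambda>r. r $ i)"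
    and succ_out_loc: "succ G (out_loc G) b = out_loc G"
    and upd_out_loc: "upd G (out_loc G) b = (\<lambda>x r. x)"
    and affine_upd_upd: "affine_upd (upd G l b)"
    and upd_not_Determ: "kind G l \<noteq> Determ \<Longrightarrow> upd G l b = (\<lambda>x r. x)"
    and guard_prop_linear: "kind G l = Determ \<Longrightarrow> prop_linear (guard G l b)"
    and guard_False_iff: "kind G l = Determ \<Longrightarrow> guard G l False x \<longleftrightarrow> \<not> guard G l True x"
    and prb_bounds: "kind G l = Probab \<Longrightarrow> 0 \<le> prb G l \<and> prb G l \<le> 1"
  using well_formed unfolding well_formed_def by blast+

lemma
  shows eps_ge_1: "1 \<le> \<epsilon>"
    and K'_le: "K' \<le> -1"
    and eta_affine: "\<exists>a c. \<forall>x. \<eta> l x = a \<bullet> x + c"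
    and eta_nonneg: "l \<noteq> out_loc G \<Longrightarrow> inv_holds I l x \<Longrightarrow> 0 \<le> \<eta> l x"
    and eta_out_loc_ge: "inv_holds I (out_loc G) x \<Longrightarrow> K' \<le> \<eta> (out_loc G) x"
    and pre_exp_decrease: "l \<noteq> out_loc G \<Longrightarrow> inv_holds I l x \<Longrightarrow> pre_exp G \<eta> l x \<le> \<eta> l x - \<epsilon>"
  using LRSM unfolding is_LRSM_def by blast+

abbreviation "coin \<equiv> uniform_measure lborel {0..1::real}"
abbreviation "step_noise \<equiv> dist G \<Otimes>\<^sub>M coin"
abbreviation "cfg_space \<equiv> (count_space UNIV :: 'l measure) \<Otimes>\<^sub>M (borel :: (real ^ 'n) measure)"

lemma prob_space_coin: "prob_space coin"
  by (rule prob_space_uniform_measure) auto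

lemma prob_space_step_noise: "prob_space step_noise"
  by (rule prob_space_pair[OF prob_space_dist prob_space_coin])

sublocale N: sequence_space step_noise
  using prob_space_step_noise
  by (simp add: sequence_space_def product_prob_space_def product_prob_space_axioms_def
      product_sigma_finite_def prob_space_imp_sigma_finite)

lemma noise_eq: "noise G = N.S"
  by (simp add: noise_def)

lemma measurable_sample[measurable]: "fst \<in> borel_measurable step_noise"
  using measurable_fst[of "dist G" coin] by (simp add: measurable_cong_sets[OF refl sets_dist])

lemma measurable_coin[measurable]: "snd \<in> borel_measurable step_noise"
  using measurable_snd[of "dist G" coin] by (simp add: measurable_cong_sets[OF refl sets_uniform_measure])

lemma measurable_upd[measurable]:
  assumes "f \<in> borel_measurable M" "g \<in> borel_measurable M"
  shows "(\<lambda>w. upd G l b (f w) (g w)) \<in> borel_measurable M"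
  using borel_measurable_continuous_on[OF continuous_on_affine_upd[OF affine_upd_upd]
      borel_measurable_Pair[OF assms]] by simp

lemma integrable_upd: "integrable (dist G) (upd G l b x)"
proof -
  interpret prob_space "dist G"
    by (rule prob_space_dist)
  obtain A B c where upd: "\<And>x r. upd G l b x r = A *v x + B *v r + c"
    using affine_upd_upd unfolding affine_upd_def by blast
  have "integrable (dist G) (\<lambda>r. r)"
    by (rule integrable_vec_componentwise) (rule integrable_dist_component)
  then show ?thesis
    unfolding upd by (intro Bochner_Integration.integrable_add integrable_const
        integrable_bounded_linear[OF matrix_vector_mul_bounded_linear])
qed

lemma measurable_eta[measurable]: "(\<lambda>c. \<eta> (fst c) (snd c)) \<in> borel_measurable cfg_space"
proof (rule measurable_compose_countable'[where f="\<lambda>l c. \<eta> l (snd c)", OF _ measurable_fst])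
  fix l
  obtain a c where "\<forall>x. \<eta> l x = a \<bullet> x + c"
    using eta_affine by blast
  then show "(\<lambda>p. \<eta> l (snd p)) \<in> borel_measurable cfg_space"
    by simp
qed simp

lemma AE_dist_support: "AE r in dist G. r \<in> dist_support G"
  using AE_open_neighbourhoods_positive[OF sets_dist] by (simp add: dist_support_def)

lemma AE_step_noise_support: "AE s in step_noise. fst s \<in> dist_support G"
proof -
  interpret P: pair_sigma_finite "dist G" coin
    using prob_space_dist prob_space_coin
    by (simp add: pair_sigma_finite_def prob_space_imp_sigma_finite)
  obtain N where N: "N \<in> null_sets (dist G)" "{r \<in> space (dist G). r \<notin> dist_support G} \<subseteq> N"
    using AE_dist_support unfolding eventually_ae_filter by blast
  then have "N \<times> space coin \<in> null_sets step_noise"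
    by (intro P.M2.times_in_null_sets1) auto
  moreover have "{s \<in> space step_noise. fst s \<notin> dist_support G} \<subseteq> N \<times> space coin"
    using N(2) by (auto simp: space_pair_measure)
  ultimately show ?thesis
    by (rule AE_I')
qed

lemma dist_support_nonempty: "\<exists>r. r \<in> dist_support G"
proof (rule ccontr)
  assume "\<nexists>r. r \<in> dist_support G"
  then show False
    using AE_dist_support prob_space.AE_const[OF prob_space_dist] by simp
qed

lemma reachable_step: "reachable G c \<Longrightarrow> step_rel G c c' \<Longrightarrow> reachable G c'"
  unfolding reachable_def by (rule rtranclp.rtrancl_into_rtrancl)

lemma reachable_successor:
  assumes "reachable G (l, x)" "enabled G l x b" "r \<in> dist_support G"
  shows "reachable G (succ G l b, upd G l b x r)"
  using assms(2,3) by (intro reachable_step[OF assms(1)]) (auto simp: step_rel_def)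

lemma reachable_inv_holds: "reachable G (l, x) \<Longrightarrow> inv_holds I l x"
  using invariant unfolding lin_invariant_def by blast

lemma reachable_eta_ge: "reachable G (l, x) \<Longrightarrow> K' \<le> \<eta> l x"
  using reachable_inv_holds eta_out_loc_ge eta_nonneg K'_le by (cases "l = out_loc G") force+

lemma reachable_eta_succ_ge:
  assumes "reachable G (l, x)" "kind G l \<noteq> Determ"
  shows "K' \<le> \<eta> (succ G l b) x"
proof -
  obtain r where "r \<in> dist_support G"
    using dist_support_nonempty by blast
  then show ?thesis
    using reachable_successor[OF assms(1), of b r] assms(2)
    by (auto simp: enabled_def upd_not_Determ intro: reachable_eta_ge)
qed

lemma fpath_reachable: "fpath G h \<Longrightarrow> reachable G (last h)"
proof -
  assume h: "fpath G h"
  have "i < length h \<Longrightarrow> reachable G (h ! i)" for i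
  proof (induction i)
    case 0
    then show ?case
      using h by (auto simp: fpath_def reachable_def hd_conv_nth)
  next
    case (Suc i)
    then show ?case
      using h by (auto simp: fpath_def intro: reachable_step)
  qed
  then show ?thesis
    using h by (simp add: fpath_def last_conv_nth)
qed

text \<open>\<open>\<eta> - K'\<close> is nonnegative at reachable configurations (conditions C2 and C3), so passing
  to \<open>ennreal\<close> loses nothing along runs.\<close>

definition potential :: "'l \<times> (real ^ 'n) \<Rightarrow> ennreal" where
  "potential c = ennreal (\<eta> (fst c) (snd c) - K')"

definition running :: "'l \<times> (real ^ 'n) \<Rightarrow> ennreal" where
  "running c = (if fst c = out_loc G then 0 else 1)"

lemma measurable_potential[measurable]: "potential \<in> borel_measurable cfg_space"
  unfolding potential_def[abs_def] by measurable

lemma measurable_running[measurable]: "running \<in> borel_measurable cfg_space"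
  unfolding running_def[abs_def] by measurable

definition chosen_branch :: "('l, 'n) sched \<Rightarrow> ('l, 'n) sched \<Rightarrow> ('l \<times> (real ^ 'n)) list \<Rightarrow> real \<Rightarrow> bool" where
  "chosen_branch \<sigma> \<pi> h u =
     (case kind G (fst (last h)) of
        Angel \<Rightarrow> \<sigma> h
      | Demon \<Rightarrow> \<pi> h
      | Probab \<Rightarrow> u < prb G (fst (last h))
      | Determ \<Rightarrow> guard G (fst (last h)) True (snd (last h)))"

lemma next_cfg_eq:
  "next_cfg G \<sigma> \<pi> h s =
     (let b = chosen_branch \<sigma> \<pi> h (snd s) in (succ G (fst (last h)) b, upd G (fst (last h)) b (snd (last h)) (fst s)))"
  by (simp add: next_cfg_def chosen_branch_def Let_def)

lemma enabled_chosen_branch: "enabled G (fst (last h)) (snd (last h)) (chosen_branch \<sigma> \<pi> h u)"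
  using guard_False_iff
  by (cases "kind G (fst (last h))"; cases "guard G (fst (last h)) True (snd (last h))")
    (auto simp: enabled_def chosen_branch_def)

lemma step_rel_next_cfg:
  "fst s \<in> dist_support G \<Longrightarrow> step_rel G (last h) (next_cfg G \<sigma> \<pi> h s)"
  using enabled_chosen_branch unfolding step_rel_def next_cfg_eq Let_def by blast

lemma next_cfg_out_loc: "fst (last h) = out_loc G \<Longrightarrow> next_cfg G \<sigma> \<pi> h s = last h"
  by (simp add: next_cfg_eq Let_def succ_out_loc upd_out_loc prod_eq_iff)

lemma measurable_transition:
  assumes "L \<in> M \<rightarrow>\<^sub>M count_space UNIV" "B \<in> M \<rightarrow>\<^sub>M count_space UNIV"
    and "X \<in> borel_measurable M" "R \<in> borel_measurable M"
  shows "(\<lambda>p. (succ G (L p) (B p), upd G (L p) (B p) (X p) (R p))) \<in> M \<rightarrow>\<^sub>M cfg_space"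
proof -
  have "(\<lambda>p. (succ G l b, upd G l b (X p) (R p))) \<in> M \<rightarrow>\<^sub>M cfg_space" for l b
    by (intro measurable_Pair measurable_const measurable_upd assms(3,4)) simp
  then have "(\<lambda>p. (succ G l (B p), upd G l (B p) (X p) (R p))) \<in> M \<rightarrow>\<^sub>M cfg_space" for l
    by (rule measurable_compose_countable'[where f="\<lambda>b p. (succ G l b, upd G l b (X p) (R p))", OF _ assms(2)]) simp
  then show ?thesis
    by (rule measurable_compose_countable'[where f="\<lambda>l p. (succ G l (B p), upd G l (B p) (X p) (R p))", OF _ assms(1)]) simp
qed

definition greedy_sched :: "('l, 'n) sched" where
  "greedy_sched h \<longleftrightarrow> \<eta> (succ G (fst (last h)) True) (snd (last h)) \<le> \<eta> (succ G (fst (last h)) False) (snd (last h))"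

lemma greedy_greedy_sched: "greedy G \<eta> greedy_sched"
  unfolding greedy_def greedy_sched_def by (auto simp: min_def)

lemma sched_measurable_greedy_sched: "sched_measurable greedy_sched"
  unfolding sched_measurable_def
proof
  fix n
  let ?F = "\<lambda>c. \<eta> (succ G (fst c) True) (snd c) \<le> \<eta> (succ G (fst c) False) (snd c)"
  have "Measurable.pred cfg_space ?F"
  proof (rule measurable_compose_countable'[where f="\<lambda>l c. \<eta> (succ G l True) (snd c) \<le> \<eta> (succ G l False) (snd c)",
        OF _ measurable_fst])
    fix l
    obtain a1 c1 a2 c2 where "\<forall>x. \<eta> (succ G l True) x = a1 \<bullet> x + c1" "\<forall>x. \<eta> (succ G l False) x = a2 \<bullet> x + c2"
      using eta_affine by metis
    then show "Measurable.pred cfg_space (\<lambda>c. \<eta> (succ G l True) (snd c) \<le> \<eta> (succ G l False) (snd c))"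
      by simp
  qed simp
  then have "(\<lambda>h. ?F (h n)) \<in> PiM UNIV (\<lambda>_::nat. cfg_space) \<rightarrow>\<^sub>M count_space UNIV"
    by (intro measurable_compose[OF measurable_component_singleton]) simp_all
  then show "(\<lambda>h. greedy_sched (map h [0..<Suc n])) \<in> PiM UNIV (\<lambda>_::nat. cfg_space) \<rightarrow>\<^sub>M count_space UNIV"
    by (simp add: greedy_sched_def last_map del: upt_Suc)
qed

lemma nn_integral_potential_coin_flip:
  assumes reach: "reachable G (l, x)" and l: "kind G l = Probab"
  shows "(\<integral>\<^sup>+s. potential (succ G l (snd s < prb G l), x) \<partial>step_noise) = ennreal (pre_exp G \<eta> l x - K')"
    and "K' \<le> pre_exp G \<eta> l x"
proof -
  define p where "p = prb G l"
  define a where "a = \<eta> (succ G l True) x - K'"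
  define b where "b = \<eta> (succ G l False) x - K'"
  have p: "0 \<le> p" "p \<le> 1"
    using prb_bounds[OF l] by (auto simp: p_def)
  have ab: "0 \<le> a" "0 \<le> b"
    using reachable_eta_succ_ge[OF reach] l by (auto simp: a_def b_def)
  have pre: "pre_exp G \<eta> l x - K' = p * a + (1 - p) * b"
    using l by (simp add: pre_exp_def a_def b_def p_def algebra_simps)
  have "(\<integral>\<^sup>+s. potential (succ G l (snd s < p), x) \<partial>step_noise) = (\<integral>\<^sup>+u. (if u < p then ennreal a else ennreal b) \<partial>coin)"
    by (subst nn_integral_pair_measure_snd[OF prob_space_dist prob_space_imp_sigma_finite[OF prob_space_coin]])
      (auto simp: potential_def a_def b_def intro!: nn_integral_cong)
  also have "\<dots> = ennreal (p * a + (1 - p) * b)"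
    using p ab by (simp add: nn_integral_uniform_unit_threshold ennreal_mult ennreal_plus)
  finally show "(\<integral>\<^sup>+s. potential (succ G l (snd s < prb G l), x) \<partial>step_noise) = ennreal (pre_exp G \<eta> l x - K')"
    by (simp add: pre p_def)
  show "K' \<le> pre_exp G \<eta> l x"
    using pre p ab by (smt (verit) mult_nonneg_nonneg)
qed

lemma nn_integral_potential_affine_step:
  assumes reach: "reachable G (l, x)" and l: "kind G l = Determ"
  defines "b \<equiv> guard G l True x"
  shows "(\<integral>\<^sup>+s. potential (succ G l b, upd G l b x (fst s)) \<partial>step_noise) = ennreal (pre_exp G \<eta> l x - K')"
    and "K' \<le> pre_exp G \<eta> l x"
proof -
  interpret D: prob_space "dist G"
    by (rule prob_space_dist)
  obtain a c where eta: "\<And>y. \<eta> (succ G l b) y = a \<bullet> y + c"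
    using eta_affine by blast
  have enabled: "enabled G l x b"
    using l guard_False_iff by (cases "guard G l True x") (auto simp: enabled_def b_def)
  have "AE r in dist G. K' \<le> \<eta> (succ G l b) (upd G l b x r)"
    using AE_dist_support by eventually_elim (rule reachable_eta_ge[OF reachable_successor[OF reach enabled]])
  then have nonneg: "AE r in dist G. 0 \<le> a \<bullet> upd G l b x r + (c - K')"
    by eventually_elim (simp add: eta)
  have pre: "pre_exp G \<eta> l x - K' = a \<bullet> D.expectation (upd G l b x) + (c - K')"
    using l by (simp add: pre_exp_def b_def[symmetric] eta)
  have "(\<integral>\<^sup>+s. potential (succ G l b, upd G l b x (fst s)) \<partial>step_noise)
      = (\<integral>\<^sup>+r. ennreal (a \<bullet> upd G l b x r + (c - K')) \<partial>dist G)"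
    by (subst nn_integral_pair_measure_fst[OF prob_space_imp_sigma_finite[OF prob_space_dist] prob_space_coin])
      (auto simp: potential_def eta add_diff_eq measurable_cong_sets[OF sets_dist refl] intro: measurable_upd)
  then show "(\<integral>\<^sup>+s. potential (succ G l b, upd G l b x (fst s)) \<partial>step_noise) = ennreal (pre_exp G \<eta> l x - K')"
    using D.nn_integral_inner_affine(1)[OF integrable_upd nonneg] pre by (simp add: add_diff_eq)
  show "K' \<le> pre_exp G \<eta> l x"
    using D.nn_integral_inner_affine(2)[OF integrable_upd nonneg] pre by simp
qed

end

locale scheduled_run = lrsm_program G I \<eta> \<epsilon> K K'
  for G :: "('l::finite, 'n::finite, 'r::finite) sgs"
    and I :: "'l \<Rightarrow> (real ^ 'n \<Rightarrow> bool) set"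
    and \<eta> :: "'l \<Rightarrow> real ^ 'n \<Rightarrow> real"
    and \<epsilon> K K' :: real +
  fixes \<sigma> \<pi> :: "('l, 'n) sched"
  assumes sched_measurable_\<sigma>: "sched_measurable \<sigma>" and sched_measurable_\<pi>: "sched_measurable \<pi>"
begin

abbreviation "run_hist \<equiv> hist G \<sigma> \<pi>"
abbreviation "run_cfg \<equiv> cfg G \<sigma> \<pi>"

lemma run_cfg_0: "run_cfg \<omega> 0 = (init_loc G, init_val G)"
  by (simp add: cfg_def)

lemma run_cfg_Suc: "run_cfg \<omega> (Suc n) = next_cfg G \<sigma> \<pi> (run_hist \<omega> n) (\<omega> n)"
  by (simp add: cfg_def)

lemma last_run_hist: "last (run_hist \<omega> n) = run_cfg \<omega> n"
  by (simp add: cfg_def)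

lemma run_hist_eq_map: "run_hist \<omega> n = map (run_cfg \<omega>) [0..<Suc n]"
proof (induction n)
  case (Suc n)
  have "run_hist \<omega> (Suc n) = run_hist \<omega> n @ [run_cfg \<omega> (Suc n)]"
    by (simp add: cfg_def)
  then show ?case
    using Suc.IH by simp
qed (simp add: cfg_def)

lemma run_hist_prefix: "(\<And>j. j < n \<Longrightarrow> \<omega> j = \<omega>' j) \<Longrightarrow> run_hist \<omega> n = run_hist \<omega>' n"
  by (induction n) auto

lemma measurable_sched_run_hist:
  assumes "sched_measurable s" and cfg: "\<And>j. j \<le> n \<Longrightarrow> (\<lambda>\<omega>. run_cfg \<omega> j) \<in> N.S \<rightarrow>\<^sub>M cfg_space"
  shows "(\<lambda>\<omega>. s (run_hist \<omega> n)) \<in> N.S \<rightarrow>\<^sub>M count_space UNIV"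
proof -
  have "(\<lambda>h. s (map h [0..<Suc n])) \<in> PiM UNIV (\<lambda>_::nat. cfg_space) \<rightarrow>\<^sub>M count_space UNIV"
    using assms(1) unfolding sched_measurable_def by blast
  moreover have "(\<lambda>\<omega> j. run_cfg \<omega> (min j n)) \<in> N.S \<rightarrow>\<^sub>M PiM UNIV (\<lambda>_::nat. cfg_space)"
    using cfg by (intro measurable_PiM_single') (auto simp: space_pair_measure)
  ultimately have "(\<lambda>\<omega>. s (map (\<lambda>j. run_cfg \<omega> (min j n)) [0..<Suc n])) \<in> N.S \<rightarrow>\<^sub>M count_space UNIV"
    by (rule measurable_compose[rotated])
  moreover have "map (\<lambda>j. run_cfg \<omega> (min j n)) [0..<Suc n] = run_hist \<omega> n" for \<omega>
    by (simp add: run_hist_eq_map del: upt_Suc)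
  ultimately show ?thesis
    by simp
qed

lemma measurable_chosen_branch:
  assumes cfg: "\<And>j. j \<le> n \<Longrightarrow> (\<lambda>\<omega>. run_cfg \<omega> j) \<in> N.S \<rightarrow>\<^sub>M cfg_space"
  shows "(\<lambda>p. chosen_branch \<sigma> \<pi> (run_hist (fst p) n) (snd (snd p))) \<in> N.S \<Otimes>\<^sub>M step_noise \<rightarrow>\<^sub>M count_space UNIV"
proof -
  define B where "B = (\<lambda>l (p :: (nat \<Rightarrow> (real ^ 'r) \<times> real) \<times> (real ^ 'r) \<times> real). case kind G l of
      Angel \<Rightarrow> \<sigma> (run_hist (fst p) n)
    | Demon \<Rightarrow> \<pi> (run_hist (fst p) n)
    | Probab \<Rightarrow> snd (snd p) < prb G l
    | Determ \<Rightarrow> guard G l True (snd (run_cfg (fst p) n)))"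
  have cfg_n: "(\<lambda>p. run_cfg (fst p) n) \<in> N.S \<Otimes>\<^sub>M step_noise \<rightarrow>\<^sub>M cfg_space"
    by (rule measurable_compose[OF measurable_fst cfg]) simp
  have "B l \<in> N.S \<Otimes>\<^sub>M step_noise \<rightarrow>\<^sub>M count_space UNIV" for l
  proof (cases "kind G l")
    case Angel
    then show ?thesis
      using measurable_compose[OF measurable_fst measurable_sched_run_hist[where n=n, OF sched_measurable_\<sigma> cfg]]
      by (simp add: B_def)
  next
    case Demon
    then show ?thesis
      using measurable_compose[OF measurable_fst measurable_sched_run_hist[where n=n, OF sched_measurable_\<pi> cfg]]
      by (simp add: B_def)
  next
    case Probab
    then show ?thesis
      unfolding B_def by simp measurable
  next
    case Determ
    then show ?thesis
      using measurable_compose[OF measurable_compose[OF cfg_n measurable_snd]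
          prop_linear_measurable[OF guard_prop_linear[OF Determ]]]
      by (simp add: B_def)
  qed
  then have "(\<lambda>p. B (fst (run_cfg (fst p) n)) p) \<in> N.S \<Otimes>\<^sub>M step_noise \<rightarrow>\<^sub>M count_space UNIV"
    by (rule measurable_compose_countable'[where f=B, OF _ measurable_compose[OF cfg_n measurable_fst]]) simp_all
  then show ?thesis
    by (simp only: B_def chosen_branch_def last_run_hist)
qed

lemma measurable_next_cfg_run_hist:
  assumes cfg: "\<And>j. j \<le> n \<Longrightarrow> (\<lambda>\<omega>. run_cfg \<omega> j) \<in> N.S \<rightarrow>\<^sub>M cfg_space"
  shows "(\<lambda>p. next_cfg G \<sigma> \<pi> (run_hist (fst p) n) (snd p)) \<in> N.S \<Otimes>\<^sub>M step_noise \<rightarrow>\<^sub>M cfg_space"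
proof -
  have cfg_n: "(\<lambda>p. run_cfg (fst p) n) \<in> N.S \<Otimes>\<^sub>M step_noise \<rightarrow>\<^sub>M cfg_space"
    by (rule measurable_compose[OF measurable_fst cfg]) simp
  show ?thesis
    unfolding next_cfg_eq Let_def last_run_hist
  proof (rule measurable_transition)
    show "(\<lambda>p. fst (run_cfg (fst p) n)) \<in> N.S \<Otimes>\<^sub>M step_noise \<rightarrow>\<^sub>M count_space UNIV"
      by (rule measurable_compose[OF cfg_n measurable_fst])
    show "(\<lambda>p. snd (run_cfg (fst p) n)) \<in> borel_measurable (N.S \<Otimes>\<^sub>M step_noise)"
      by (rule measurable_compose[OF cfg_n measurable_snd])
    show "(\<lambda>p. fst (snd p)) \<in> borel_measurable (N.S \<Otimes>\<^sub>M step_noise)"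
      by measurable
  qed (rule measurable_chosen_branch[OF cfg])
qed

lemma measurable_run_cfg[measurable]: "(\<lambda>\<omega>. run_cfg \<omega> n) \<in> N.S \<rightarrow>\<^sub>M cfg_space"
proof -
  have "\<forall>j\<le>n. (\<lambda>\<omega>. run_cfg \<omega> j) \<in> N.S \<rightarrow>\<^sub>M cfg_space"
  proof (induction n)
    case 0
    then show ?case
      by (simp add: run_cfg_0)
  next
    case (Suc n)
    then have cfg: "\<And>j. j \<le> n \<Longrightarrow> (\<lambda>\<omega>. run_cfg \<omega> j) \<in> N.S \<rightarrow>\<^sub>M cfg_space"
      by blast
    have "(\<lambda>\<omega>. next_cfg G \<sigma> \<pi> (run_hist (fst (\<omega>, \<omega> n)) n) (snd (\<omega>, \<omega> n))) \<in> N.S \<rightarrow>\<^sub>M cfg_space"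
      by (rule measurable_compose[OF _ measurable_next_cfg_run_hist[OF cfg]]) simp
    then have "(\<lambda>\<omega>. run_cfg \<omega> (Suc n)) \<in> N.S \<rightarrow>\<^sub>M cfg_space"
      by (simp add: run_cfg_Suc)
    then show ?case
      using cfg by (auto simp: le_Suc_eq)
  qed
  then show ?thesis
    by simp
qed

lemma measurable_potential_next_cfg_run_hist[measurable]:
  "(\<lambda>p. potential (next_cfg G \<sigma> \<pi> (run_hist (fst p) n) (snd p))) \<in> borel_measurable (N.S \<Otimes>\<^sub>M step_noise)"
  by (rule measurable_compose[OF measurable_next_cfg_run_hist[OF measurable_run_cfg] measurable_potential])

lemma fpath_run_hist:
  assumes "\<And>i. fst (\<omega> i) \<in> dist_support G"
  shows "fpath G (run_hist \<omega> n)"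
proof -
  have "step_rel G (run_cfg \<omega> i) (run_cfg \<omega> (Suc i))" for i
    using step_rel_next_cfg[OF assms, of "run_hist \<omega> i" \<sigma> \<pi>] by (simp add: run_cfg_Suc last_run_hist)
  then show ?thesis
    by (auto simp: fpath_def run_hist_eq_map nth_append run_cfg_0 hd_conv_nth simp del: upt_Suc)
qed

lemma AE_fpath_run_hist: "AE \<omega> in N.S. \<forall>n. fpath G (run_hist \<omega> n)"
proof -
  have "AE \<omega> in N.S. \<forall>i. fst (\<omega> i) \<in> dist_support G"
    unfolding AE_all_countable by (intro allI N.AE_component AE_step_noise_support) simp
  then show ?thesis
    by eventually_elim (blast intro: fpath_run_hist)
qed

lemma run_cfg_out_loc_absorbing:
  "fst (run_cfg \<omega> k) = out_loc G \<Longrightarrow> fst (run_cfg \<omega> (k + j)) = out_loc G"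
  by (induction j) (simp_all add: run_cfg_Suc next_cfg_out_loc last_run_hist)

lemma term_time_eq_suminf_running: "term_time G \<sigma> \<pi> \<omega> = (\<Sum>k. running (run_cfg \<omega> k))"
  unfolding term_time_def running_def by (rule hitting_time_eq_suminf) (rule run_cfg_out_loc_absorbing)

lemma nn_integral_potential_next:
  assumes greedy: "greedy G \<eta> \<sigma>" and h: "fpath G h" "last h = (l, x)"
  obtains v where "(\<integral>\<^sup>+s. potential (next_cfg G \<sigma> \<pi> h s) \<partial>step_noise) = ennreal v"
    and "0 \<le> v" and "v \<le> pre_exp G \<eta> l x - K'"
proof -
  note witness = that
  have reach: "reachable G (l, x)"
    using fpath_reachable[OF h(1)] h(2) by simp
  have nondeterministic: "thesis" if "kind G l \<noteq> Determ" "\<And>u. chosen_branch \<sigma> \<pi> h u = b"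
    and "\<eta> (succ G l b) x \<le> pre_exp G \<eta> l x" for b
  proof (rule witness)
    show "(\<integral>\<^sup>+s. potential (next_cfg G \<sigma> \<pi> h s) \<partial>step_noise) = ennreal (\<eta> (succ G l b) x - K')"
      using that(1,2) by (simp add: next_cfg_eq Let_def h(2) upd_not_Determ potential_def N.M.emeasure_space_1)
  qed (use reachable_eta_succ_ge[OF reach that(1)] that(3) in simp_all)
  show ?thesis
  proof (cases "kind G l")
    case Angel
    have "\<eta> (succ G l (\<sigma> h)) x = pre_exp G \<eta> l x"
      using greedy h Angel by (simp add: greedy_def pre_exp_def)
    then show ?thesis
      using Angel by (intro nondeterministic[of "\<sigma> h"]) (simp_all add: chosen_branch_def h(2))
  next
    case Demon
    have "\<eta> (succ G l (\<pi> h)) x \<le> pre_exp G \<eta> l x"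
      using Demon by (cases "\<pi> h") (simp_all add: pre_exp_def)
    then show ?thesis
      using Demon by (intro nondeterministic[of "\<pi> h"]) (simp_all add: chosen_branch_def h(2))
  next
    case Probab
    have "next_cfg G \<sigma> \<pi> h s = (succ G l (snd s < prb G l), x)" for s
      using Probab by (simp add: next_cfg_eq Let_def chosen_branch_def h(2) upd_not_Determ)
    then show ?thesis
      using nn_integral_potential_coin_flip[OF reach Probab] by (intro witness[of "pre_exp G \<eta> l x - K'"]) simp_all
  next
    case Determ
    have "next_cfg G \<sigma> \<pi> h s = (succ G l (guard G l True x), upd G l (guard G l True x) x (fst s))" for s
      using Determ by (simp add: next_cfg_eq Let_def chosen_branch_def h(2))
    then show ?thesis
      using nn_integral_potential_affine_step[OF reach Determ] by (intro witness[of "pre_exp G \<eta> l x - K'"]) simp_all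
  qed
qed

end

locale greedy_run = scheduled_run +
  assumes greedy: "greedy G \<eta> \<sigma>"
begin

lemma potential_next_decrease:
  assumes h: "fpath G h"
  shows "(\<integral>\<^sup>+s. potential (next_cfg G \<sigma> \<pi> h s) \<partial>step_noise) + ennreal \<epsilon> * running (last h) \<le> potential (last h)"
proof (cases "fst (last h) = out_loc G")
  case True
  then show ?thesis
    by (simp add: next_cfg_out_loc running_def N.M.emeasure_space_1)
next
  case False
  obtain l x where lx: "last h = (l, x)"
    by fastforce
  obtain v where v: "(\<integral>\<^sup>+s. potential (next_cfg G \<sigma> \<pi> h s) \<partial>step_noise) = ennreal v"
    "0 \<le> v" "v \<le> pre_exp G \<eta> l x - K'"
    using nn_integral_potential_next[OF greedy h lx] by blast
  have "pre_exp G \<eta> l x \<le> \<eta> l x - \<epsilon>"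
    using False fpath_reachable[OF h] by (intro pre_exp_decrease reachable_inv_holds) (simp_all add: lx)
  then have "ennreal v + ennreal \<epsilon> \<le> ennreal (\<eta> l x - K')"
    using v(2,3) eps_ge_1 by (simp add: ennreal_plus[symmetric] ennreal_leI del: ennreal_plus)
  then show ?thesis
    using False by (simp add: v(1) lx running_def potential_def[of "(l, x)"])
qed

lemma nn_integral_potential_step_le:
  assumes "\<omega> \<in> space N.S" "fpath G (run_hist \<omega> n)"
  shows "(\<integral>\<^sup>+s. potential (next_cfg G \<sigma> \<pi> (run_hist \<omega> n) s) + ennreal \<epsilon> * running (run_cfg \<omega> n) \<partial>step_noise)
    \<le> potential (run_cfg \<omega> n)"
proof -
  have "(\<lambda>s. (\<omega>, s)) \<in> step_noise \<rightarrow>\<^sub>M N.S \<Otimes>\<^sub>M step_noise"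
    using assms(1) by simp
  from measurable_compose[OF this measurable_potential_next_cfg_run_hist[of n]]
  have "(\<lambda>s. potential (next_cfg G \<sigma> \<pi> (run_hist \<omega> n) s)) \<in> borel_measurable step_noise"
    by simp
  then have "(\<integral>\<^sup>+s. potential (next_cfg G \<sigma> \<pi> (run_hist \<omega> n) s) + ennreal \<epsilon> * running (run_cfg \<omega> n) \<partial>step_noise)
      = (\<integral>\<^sup>+s. potential (next_cfg G \<sigma> \<pi> (run_hist \<omega> n) s) \<partial>step_noise) + ennreal \<epsilon> * running (last (run_hist \<omega> n))"
    by (simp add: nn_integral_add last_run_hist N.M.emeasure_space_1)
  also have "\<dots> \<le> potential (run_cfg \<omega> n)"
    using potential_next_decrease[OF assms(2)] by (simp add: last_run_hist)
  finally show ?thesis .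
qed

lemma expected_potential_decrease:
  "(\<integral>\<^sup>+\<omega>. potential (run_cfg \<omega> (Suc n)) \<partial>N.S) + ennreal \<epsilon> * (\<integral>\<^sup>+\<omega>. running (run_cfg \<omega> n) \<partial>N.S)
    \<le> (\<integral>\<^sup>+\<omega>. potential (run_cfg \<omega> n) \<partial>N.S)"
proof -
  define g where "g p = potential (next_cfg G \<sigma> \<pi> (run_hist (fst p) n) (snd p)) + ennreal \<epsilon> * running (run_cfg (fst p) n)"
    for p
  have g: "g \<in> borel_measurable (N.S \<Otimes>\<^sub>M step_noise)"
    unfolding g_def by measurable
  have prefix: "g (\<omega>, s) = g (\<omega>', s)" if "\<And>j. j < n \<Longrightarrow> \<omega> j = \<omega>' j" for \<omega> \<omega>' s
    by (simp add: g_def cfg_def run_hist_prefix[OF that])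
  have "(\<integral>\<^sup>+\<omega>. running (run_cfg \<omega> n) \<partial>N.S) * ennreal \<epsilon> = (\<integral>\<^sup>+\<omega>. running (run_cfg \<omega> n) * ennreal \<epsilon> \<partial>N.S)"
    by (rule nn_integral_multc[symmetric]) measurable
  then have "(\<integral>\<^sup>+\<omega>. potential (run_cfg \<omega> (Suc n)) \<partial>N.S) + ennreal \<epsilon> * (\<integral>\<^sup>+\<omega>. running (run_cfg \<omega> n) \<partial>N.S)
      = (\<integral>\<^sup>+\<omega>. potential (run_cfg \<omega> (Suc n)) + ennreal \<epsilon> * running (run_cfg \<omega> n) \<partial>N.S)"
    by (subst nn_integral_add) (auto simp: mult.commute)
  also have "\<dots> = (\<integral>\<^sup>+\<omega>. g (\<omega>, \<omega> n) \<partial>N.S)"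
    by (simp add: g_def run_cfg_Suc)
  also have "\<dots> = (\<integral>\<^sup>+\<omega>. \<integral>\<^sup>+s. g (\<omega>, s) \<partial>step_noise \<partial>N.S)"
    by (rule N.nn_integral_split_component[OF g prefix])
  also have "\<dots> \<le> (\<integral>\<^sup>+\<omega>. potential (run_cfg \<omega> n) \<partial>N.S)"
  proof (rule nn_integral_mono_AE)
    show "AE \<omega> in N.S. (\<integral>\<^sup>+s. g (\<omega>, s) \<partial>step_noise) \<le> potential (run_cfg \<omega> n)"
      using AE_fpath_run_hist AE_space by eventually_elim (simp add: g_def nn_integral_potential_step_le)
  qed
  finally show ?thesis .
qed

lemma exp_T_le: "exp_T G \<sigma> \<pi> \<le> ennreal ((\<eta> (init_loc G) (init_val G) - K') / \<epsilon>)"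
proof -
  define c where "c = \<eta> (init_loc G) (init_val G) - K'"
  have "exp_T G \<sigma> \<pi> = (\<Sum>k. \<integral>\<^sup>+\<omega>. running (run_cfg \<omega> k) \<partial>N.S)"
    unfolding exp_T_def noise_eq term_time_eq_suminf_running by (rule nn_integral_suminf) measurable
  then have "ennreal \<epsilon> * exp_T G \<sigma> \<pi> \<le> (\<integral>\<^sup>+\<omega>. potential (run_cfg \<omega> 0) \<partial>N.S)"
    using ennreal_mult_suminf_le_of_decrease[where a="\<lambda>n. \<integral>\<^sup>+\<omega>. potential (run_cfg \<omega> n) \<partial>N.S"
        and b="\<lambda>n. \<integral>\<^sup>+\<omega>. running (run_cfg \<omega> n) \<partial>N.S", OF expected_potential_decrease]
    by simp
  also have "\<dots> = ennreal \<epsilon> * ennreal (c / \<epsilon>)"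
    using eps_ge_1 by (simp add: run_cfg_0 potential_def c_def N.emeasure_space_1 ennreal_mult'[symmetric])
  finally show ?thesis
    using eps_ge_1 by (simp add: c_def ennreal_mult_le_mult_iff)
qed

lemma prob_term_eq_1: "prob_term G \<sigma> \<pi> = 1"
proof -
  have "exp_T G \<sigma> \<pi> \<noteq> \<infinity>"
    using exp_T_le by (metis ennreal_neq_top infinity_ennreal_def neq_top_trans)
  then have "AE \<omega> in N.S. term_time G \<sigma> \<pi> \<omega> \<noteq> \<infinity>"
    unfolding exp_T_def noise_eq term_time_eq_suminf_running by (intro nn_integral_PInf_AE) measurable
  then have "AE \<omega> in N.S. \<exists>n. fst (run_cfg \<omega> n) = out_loc G"
    by eventually_elim (auto simp: term_time_def split: if_splits)
  moreover have "{\<omega> \<in> space N.S. \<exists>n. fst (run_cfg \<omega> n) = out_loc G} \<in> sets N.S"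
    by measurable
  ultimately show ?thesis
    unfolding prob_term_def noise_eq by (simp add: N.emeasure_eq_1_AE)
qed

end

theorem theorem1:
  fixes G :: "('l::finite, 'n::finite, 'r::finite) sgs"
    and I :: "'l \<Rightarrow> (real ^ 'n \<Rightarrow> bool) set"
    and \<eta> :: "'l \<Rightarrow> real ^ 'n \<Rightarrow> real"
    and \<epsilon> K K' :: real
  assumes "well_formed G"
    and "lin_invariant G I"
    and "is_LRSM G I \<eta> \<epsilon> K K'"
  shows "(\<exists>\<sigma>. sched_measurable \<sigma> \<and> greedy G \<eta> \<sigma>) \<and>
         (\<forall>\<sigma>. sched_measurable \<sigma> \<and> greedy G \<eta> \<sigma> \<longrightarrow>
              (\<forall>\<pi>. sched_measurable \<pi> \<longrightarrow> prob_term G \<sigma> \<pi> = 1) \<and>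
              (\<Squnion>\<pi> \<in> {\<pi>. sched_measurable \<pi>}. exp_T G \<sigma> \<pi>)
                 \<le> ennreal ((\<eta> (init_loc G) (init_val G) - K') / \<epsilon>)) \<and>
         ET G \<le> ennreal ((\<eta> (init_loc G) (init_val G) - K') / \<epsilon>) \<and>
         ET G < \<infinity>"
proof -
  interpret lrsm_program G I \<eta> \<epsilon> K K'
    using assms by unfold_locales
  let ?bound = "ennreal ((\<eta> (init_loc G) (init_val G) - K') / \<epsilon>)"
  have greedy_bounds: "(\<forall>\<pi>. sched_measurable \<pi> \<longrightarrow> prob_term G \<sigma> \<pi> = 1) \<and>
      (\<Squnion>\<pi> \<in> {\<pi>. sched_measurable \<pi>}. exp_T G \<sigma> \<pi>) \<le> ?bound"
    if "sched_measurable \<sigma>" "greedy G \<eta> \<sigma>" for \<sigma>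
  proof -
    have "greedy_run G I \<eta> \<epsilon> K K' \<sigma> \<pi>" if "sched_measurable \<pi>" for \<pi>
      using assms \<open>sched_measurable \<sigma>\<close> \<open>greedy G \<eta> \<sigma>\<close> that by unfold_locales
    then show ?thesis
      using greedy_run.prob_term_eq_1 greedy_run.exp_T_le by (blast intro: SUP_least)
  qed
  have "ET G \<le> (\<Squnion>\<pi> \<in> {\<pi>. sched_measurable \<pi>}. exp_T G greedy_sched \<pi>)"
    unfolding ET_def using sched_measurable_greedy_sched by (blast intro: INF_lower)
  also have "\<dots> \<le> ?bound"
    using greedy_bounds[OF sched_measurable_greedy_sched greedy_greedy_sched] by blast
  finally have "ET G \<le> ?bound" .
  then show ?thesis
    using greedy_bounds sched_measurable_greedy_sched greedy_greedy_sched
    by (auto simp: order_le_less_trans[OF _ ennreal_less_top])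
qed

end
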